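(* For the binary tree-shifts $X_{10}=(B,D)$ and $X_{12}=(B,F)$, the limit $h_{PS}$ exists and $$h_{PS}(X_{10})=h_{PS}(X_{12})=\frac12\sum_{n=2}^\infty\frac{\log n}{2^n}.$$
   Context: Binary tree-shifts: $k=2$, directions $a_1,a_2$, alphabet $\{0,1\}$; $(P,Q)$ is the set of trees $t:\{a_1,a_2\}^*\to\{0,1\}$ with $P_{t_x,t_{xa_1}}=1$, $Q_{t_x,t_{xa_2}}=1$ for all nodes $x$. Matrices: $B=\begin{pmatrix}1&0\\0&1\end{pmatrix}$, $D=\begin{pmatrix}1&1\\1&0\end{pmatrix}$, $F=\begin{pmatrix}0&1\\1&1\end{pmatrix}$. $p(n)$ is the number of allowed blocks of length $n$ (labellings $t|_{\Delta_n}$, $\Delta_n$ the words of length $\le n$), and $h_{PS}=\lim_{n\to\infty}\frac{\log p(n)}{1+2+\cdots+2^n}$. *)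

theory Defs
  imports Complex_Main
begin

text \<open>Directions of the binary tree; nodes are finite words over them.
  The child of node x in direction d is x @ [d].\<close>
datatype dir = a1 | a2

text \<open>2x2 0-1 matrices indexed by the alphabet {0,1}.\<close>
type_synonym mat01 = "nat \<Rightarrow> nat \<Rightarrow> nat"

definition matB :: mat01 where
  "matB i j = (if i \<in> {0,1} \<and> j \<in> {0,1} \<and> i = j then 1 else 0)"

definition matD :: mat01 where
  "matD i j = (if i \<in> {0,1} \<and> j \<in> {0,1} \<and> \<not> (i = 1 \<and> j = 1) then 1 else 0)"

definition matF :: mat01 where
  "matF i j = (if i \<in> {0,1} \<and> j \<in> {0,1} \<and> \<not> (i = 0 \<and> j = 0) then 1 else 0)"

definition tree_shift :: "mat01 \<Rightarrow> mat01 \<Rightarrow> (dir list \<Rightarrow> nat) set" where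
  "tree_shift P Q = {t. (\<forall>x. t x \<in> {0,1}) \<and>
      (\<forall>x. P (t x) (t (x @ [a1])) = 1 \<and> Q (t x) (t (x @ [a2])) = 1)}"

text \<open>Restriction of a labelling to Delta_n (words of length at most n);
  outside Delta_n the value is normalised to 0.\<close>
definition block :: "(dir list \<Rightarrow> nat) \<Rightarrow> nat \<Rightarrow> (dir list \<Rightarrow> nat)" where
  "block t n = (\<lambda>x. if length x \<le> n then t x else 0)"

definition num_blocks :: "(dir list \<Rightarrow> nat) set \<Rightarrow> nat \<Rightarrow> nat" where
  "num_blocks X n = card ((\<lambda>t. block t n) ` X)"

definition hPS_seq :: "(dir list \<Rightarrow> nat) set \<Rightarrow> nat \<Rightarrow> real" where
  "hPS_seq X n = ln (real (num_blocks X n)) / real (\<Sum>i\<le>n. (2::nat) ^ i)"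

end

theory Submission
  imports Defs "HOL-Real_Asymp.Real_Asymp"
begin

text \<open>Since \<open>B\<close> is the identity, a label is copied along the whole \<open>a\<^sub>1\<close>-spine below it, so a
  block of height \<open>n + 1\<close> with root \<open>c\<close> is a pair of blocks of height \<open>n\<close>: the \<open>a\<^sub>1\<close>-subtree, again
  rooted at \<open>c\<close>, and the \<open>a\<^sub>2\<close>-subtree, rooted at any symbol that may follow \<open>c\<close> under \<open>Q\<close>.
  For \<open>D\<close> and \<open>F\<close> the only forbidden \<open>Q\<close>-transition is \<open>c' \<rightarrow> c'\<close> for one symbol \<open>c'\<close>, so the
  numbers \<open>A\<^sub>n\<close>, \<open>B\<^sub>n\<close> of blocks rooted at the other symbol and at \<open>c'\<close> satisfy
  \<open>A\<^sub>n\<^sub>+\<^sub>1 = A\<^sub>n (A\<^sub>n + B\<^sub>n)\<close> and \<open>B\<^sub>n\<^sub>+\<^sub>1 = B\<^sub>n A\<^sub>n\<close>. Hence \<open>A\<^sub>n = (n + 1) B\<^sub>n\<close>, and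
  \<open>G\<^sub>n = ln A\<^sub>n\<close> satisfies \<open>G\<^sub>n\<^sub>+\<^sub>1 = 2 G\<^sub>n + ln ((n + 2) / (n + 1))\<close>; thus \<open>G\<^sub>n / 2\<^sup>n\<close> is a
  partial sum of a series with geometric weights, which telescopes to the stated value.\<close>

section \<open>Trees as a root label and two subtrees\<close>

definition node :: "nat \<Rightarrow> (dir list \<Rightarrow> nat) \<Rightarrow> (dir list \<Rightarrow> nat) \<Rightarrow> dir list \<Rightarrow> nat" where
  "node c l r = (\<lambda>x. case x of [] \<Rightarrow> c | a1 # y \<Rightarrow> l y | a2 # y \<Rightarrow> r y)"

definition subtree :: "(dir list \<Rightarrow> nat) \<Rightarrow> dir \<Rightarrow> dir list \<Rightarrow> nat" where
  "subtree t d = (\<lambda>y. t (d # y))"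

lemma path_cases:
  obtains "x = []" | y where "x = a1 # y" | y where "x = a2 # y"
  by (metis dir.exhaust list.exhaust)

lemma node_simps [simp]:
  "node c l r [] = c" "node c l r (a1 # y) = l y" "node c l r (a2 # y) = r y"
  by (simp_all add: node_def)

lemma node_subtrees: "node (t []) (subtree t a1) (subtree t a2) = t"
proof
  fix x show "node (t []) (subtree t a1) (subtree t a2) x = t x"
    by (cases x rule: path_cases) (simp_all add: subtree_def)
qed

lemma node_eq_iff: "node c l r = node c l' r' \<longleftrightarrow> l = l' \<and> r = r'"
  by (metis node_simps(2,3) ext)

lemma inj_node: "inj (\<lambda>(l, r). node c l r)"
  by (auto intro: injI simp: node_eq_iff)

lemma block_node: "block (node c l r) (Suc n) = node c (block l n) (block r n)"
proof
  fix x show "block (node c l r) (Suc n) x = node c (block l n) (block r n) x"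
    by (cases x rule: path_cases) (simp_all add: block_def)
qed

section \<open>Tree-shifts of the form \<open>(B, Q)\<close>\<close>

lemma tree_shiftI:
  "(\<And>x. t x \<in> {0, 1}) \<Longrightarrow> (\<And>x. P (t x) (t (x @ [a1])) = 1) \<Longrightarrow>
    (\<And>x. Q (t x) (t (x @ [a2])) = 1) \<Longrightarrow> t \<in> tree_shift P Q"
  unfolding tree_shift_def by blast

lemma tree_shiftD:
  assumes "t \<in> tree_shift P Q"
  shows "t x \<in> {0, 1}" "P (t x) (t (x @ [a1])) = 1" "Q (t x) (t (x @ [a2])) = 1"
  using assms unfolding tree_shift_def by blast+

lemma subtree_in_tree_shift:
  assumes "t \<in> tree_shift P Q"
  shows "subtree t d \<in> tree_shift P Q"
proof (rule tree_shiftI)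
  fix x
  show "subtree t d x \<in> {0, 1}"
    using tree_shiftD(1)[OF assms] by (simp add: subtree_def)
  show "P (subtree t d x) (subtree t d (x @ [a1])) = 1"
    using tree_shiftD(2)[OF assms, of "d # x"] by (simp add: subtree_def)
  show "Q (subtree t d x) (subtree t d (x @ [a2])) = 1"
    using tree_shiftD(3)[OF assms, of "d # x"] by (simp add: subtree_def)
qed

lemma matB_eq_1_imp_eq: "matB i j = 1 \<Longrightarrow> i = j"
  unfolding matB_def by (cases "i = j") simp_all

lemma matB_diag: "i \<in> {0, 1} \<Longrightarrow> matB i i = 1"
  by (simp add: matB_def)

lemma tree_shift_matB_label_a1: "t \<in> tree_shift matB Q \<Longrightarrow> t [a1] = t []"
  using matB_eq_1_imp_eq[OF tree_shiftD(2)[of t matB Q "[]"]] by (metis append.left_neutral)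

lemma node_in_tree_shift_matB:
  assumes l: "l \<in> tree_shift matB Q" and r: "r \<in> tree_shift matB Q"
    and "l [] = c" and "Q c (r []) = 1"
  shows "node c l r \<in> tree_shift matB Q"
proof (rule tree_shiftI)
  fix x
  have c: "c \<in> {0, 1}"
    using tree_shiftD(1)[OF l, of "[]"] \<open>l [] = c\<close> by simp
  show "node c l r x \<in> {0, 1}"
    by (cases x rule: path_cases) (use c tree_shiftD(1)[OF l] tree_shiftD(1)[OF r] in simp_all)
  show "matB (node c l r x) (node c l r (x @ [a1])) = 1"
    by (cases x rule: path_cases)
      (use c \<open>l [] = c\<close> matB_diag tree_shiftD(2)[OF l] tree_shiftD(2)[OF r] in simp_all)
  show "Q (node c l r x) (node c l r (x @ [a2])) = 1"
    by (cases x rule: path_cases)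
      (use \<open>Q c (r []) = 1\<close> tree_shiftD(3)[OF l] tree_shiftD(3)[OF r] in simp_all)
qed

lemma tree_shift_root_cases: "t \<in> tree_shift matB Q \<Longrightarrow> t [] = 0 \<or> t [] = 1"
  using tree_shiftD(1) by blast

section \<open>Counting blocks by their root label\<close>

definition rooted_blocks :: "mat01 \<Rightarrow> nat \<Rightarrow> nat \<Rightarrow> (dir list \<Rightarrow> nat) set" where
  "rooted_blocks Q n c = (\<lambda>t. block t n) ` {t \<in> tree_shift matB Q. t [] = c}"

definition follower_blocks :: "mat01 \<Rightarrow> nat \<Rightarrow> nat \<Rightarrow> (dir list \<Rightarrow> nat) set" where
  "follower_blocks Q n c = (\<lambda>t. block t n) ` {t \<in> tree_shift matB Q. Q c (t []) = 1}"

lemma rooted_blocks_Suc: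
  "rooted_blocks Q (Suc n) c = (\<lambda>(l, r). node c l r) ` (rooted_blocks Q n c \<times> follower_blocks Q n c)"
proof (intro equalityI subsetI)
  fix u assume "u \<in> rooted_blocks Q (Suc n) c"
  then obtain t where t: "t \<in> tree_shift matB Q" "t [] = c" and u: "u = block t (Suc n)"
    unfolding rooted_blocks_def by blast
  have "u = node c (block (subtree t a1) n) (block (subtree t a2) n)"
    using block_node[of c "subtree t a1" "subtree t a2" n] node_subtrees[of t] t(2) u by simp
  moreover have "block (subtree t a1) n \<in> rooted_blocks Q n c"
    using subtree_in_tree_shift[OF t(1)] tree_shift_matB_label_a1[OF t(1)] t(2)
    unfolding rooted_blocks_def by (auto simp: subtree_def)
  moreover have "block (subtree t a2) n \<in> follower_blocks Q n c"
    using subtree_in_tree_shift[OF t(1)] tree_shiftD(3)[OF t(1), of "[]"] t(2)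
    unfolding follower_blocks_def by (auto simp: subtree_def)
  ultimately show "u \<in> (\<lambda>(l, r). node c l r) ` (rooted_blocks Q n c \<times> follower_blocks Q n c)"
    by auto
next
  fix u assume "u \<in> (\<lambda>(l, r). node c l r) ` (rooted_blocks Q n c \<times> follower_blocks Q n c)"
  then obtain l r where u: "u = node c l r"
    and "l \<in> rooted_blocks Q n c" "r \<in> follower_blocks Q n c" by auto
  then obtain t1 t2 where t1: "t1 \<in> tree_shift matB Q" "t1 [] = c" "l = block t1 n"
    and t2: "t2 \<in> tree_shift matB Q" "Q c (t2 []) = 1" "r = block t2 n"
    unfolding rooted_blocks_def follower_blocks_def by blast
  have "node c t1 t2 \<in> tree_shift matB Q"
    by (rule node_in_tree_shift_matB) (fact t1(1,2) t2(1,2))+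
  then show "u \<in> rooted_blocks Q (Suc n) c"
    unfolding rooted_blocks_def u t1(3) t2(3) block_node[symmetric] by force
qed

lemma follower_blocks_eq:
  "follower_blocks Q n c =
    (if Q c 0 = 1 then rooted_blocks Q n 0 else {}) \<union> (if Q c 1 = 1 then rooted_blocks Q n 1 else {})"
proof -
  have "{t \<in> tree_shift matB Q. Q c (t []) = 1} =
      (if Q c 0 = 1 then {t \<in> tree_shift matB Q. t [] = 0} else {}) \<union>
      (if Q c 1 = 1 then {t \<in> tree_shift matB Q. t [] = 1} else {})"
    by (cases "Q c 0 = 1"; cases "Q c 1 = 1") (auto dest: tree_shift_root_cases)
  then show ?thesis
    unfolding follower_blocks_def rooted_blocks_def by (simp add: image_Un)
qed

lemma blocks_eq_rooted_blocks:
  "(\<lambda>t. block t n) ` tree_shift matB Q = rooted_blocks Q n 0 \<union> rooted_blocks Q n 1"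
  unfolding rooted_blocks_def using tree_shift_root_cases[of _ Q] by blast

lemma rooted_block_root: "u \<in> rooted_blocks Q n c \<Longrightarrow> u [] = c"
  unfolding rooted_blocks_def block_def by auto

lemma rooted_blocks_disjoint: "c \<noteq> c' \<Longrightarrow> rooted_blocks Q n c \<inter> rooted_blocks Q n c' = {}"
  using rooted_block_root[of _ Q n c] rooted_block_root[of _ Q n c'] by fastforce

lemma rooted_blocks_0_subset: "rooted_blocks Q 0 c \<subseteq> {\<lambda>x. if x = [] then c else 0}"
  unfolding rooted_blocks_def block_def by auto

lemma finite_rooted_blocks: "finite (rooted_blocks Q n c)"
proof (induction n arbitrary: c)
  case 0
  show ?case using rooted_blocks_0_subset by (rule finite_subset) simp
next
  case (Suc n)
  then have "finite (follower_blocks Q n c)" by (simp add: follower_blocks_eq)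
  with Suc show ?case by (simp add: rooted_blocks_Suc)
qed

lemma card_rooted_blocks_Suc:
  "card (rooted_blocks Q (Suc n) c) = card (rooted_blocks Q n c) * card (follower_blocks Q n c)"
  by (simp add: rooted_blocks_Suc card_image[OF inj_on_subset[OF inj_node]] card_cartesian_product)

lemma card_rooted_blocks_Un:
  "c \<noteq> c' \<Longrightarrow>
    card (rooted_blocks Q n c \<union> rooted_blocks Q n c') = card (rooted_blocks Q n c) + card (rooted_blocks Q n c')"
  by (rule card_Un_disjoint[OF finite_rooted_blocks finite_rooted_blocks rooted_blocks_disjoint])

lemma num_blocks_eq_card_rooted_blocks:
  "num_blocks (tree_shift matB Q) n = card (rooted_blocks Q n 0) + card (rooted_blocks Q n 1)"
  unfolding num_blocks_def blocks_eq_rooted_blocks by (rule card_rooted_blocks_Un) simp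

lemma card_rooted_blocks_0:
  assumes "c \<in> {0, 1}" "e \<in> {0, 1}" "\<And>v. v \<in> {0, 1} \<Longrightarrow> Q v e = 1"
  shows "card (rooted_blocks Q 0 c) = 1"
proof -
  define t where "t = (\<lambda>x::dir list. if set x \<subseteq> {a1} then c else e)"
  have t01: "t x \<in> {0, 1}" for x using assms(1,2) by (simp add: t_def)
  have "t \<in> tree_shift matB Q"
  proof (rule tree_shiftI)
    fix x
    show "t x \<in> {0, 1}" by (fact t01)
    show "matB (t x) (t (x @ [a1])) = 1" using matB_diag[OF t01[of x]] by (simp add: t_def)
    show "Q (t x) (t (x @ [a2])) = 1" using assms(3)[OF t01[of x]] by (simp add: t_def)
  qed
  moreover have "t [] = c" by (simp add: t_def)
  ultimately have "block t 0 \<in> rooted_blocks Q 0 c"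
    unfolding rooted_blocks_def by (intro imageI) simp
  with subset_singletonD[OF rooted_blocks_0_subset[of Q c]]
  obtain b where "rooted_blocks Q 0 c = {b}" by fast
  then show ?thesis by simp
qed

lemma card_rooted_blocks_single_forbidden_loop:
  assumes c: "c \<in> {0, 1}"
    and Q: "Q c c = 1" "Q c (1 - c) = 1" "Q (1 - c) c = 1" "Q (1 - c) (1 - c) \<noteq> 1"
  defines "A n \<equiv> card (rooted_blocks Q n c)" and "B n \<equiv> card (rooted_blocks Q n (1 - c))"
  shows "A 0 = 1" "B 0 = 1" "A (Suc n) = A n * (A n + B n)" "B (Suc n) = B n * A n"
    "num_blocks (tree_shift matB Q) n = A n + B n"
proof -
  have c': "1 - c \<in> {0, 1}" "c \<noteq> 1 - c" using c by auto
  have Q_to_c: "Q v c = 1" if "v \<in> {0, 1}" for v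
    using that c Q by (cases "v = c") auto
  show "A 0 = 1" "B 0 = 1"
    unfolding A_def B_def
    using card_rooted_blocks_0[where e = c and Q = Q, OF _ c Q_to_c] c c'(1) by simp_all
  have "follower_blocks Q n c = rooted_blocks Q n c \<union> rooted_blocks Q n (1 - c)"
    "follower_blocks Q n (1 - c) = rooted_blocks Q n c"
    using c Q by (auto simp: follower_blocks_eq)
  then show "A (Suc n) = A n * (A n + B n)" "B (Suc n) = B n * A n"
    using card_rooted_blocks_Un[OF c'(2), of Q n] unfolding A_def B_def card_rooted_blocks_Suc
    by simp_all
  show "num_blocks (tree_shift matB Q) n = A n + B n"
    unfolding A_def B_def num_blocks_eq_card_rooted_blocks using c by auto
qed

section \<open>The growth rate\<close>

lemma summable_ln_div_pow2: "summable (\<lambda>k. ln (real k + 2) / 2 ^ k)"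
proof (rule summable_comparison_test_bigo)
  show "summable (\<lambda>k. norm (1 / (4 / 3 :: real) ^ k))"
    by (simp add: power_one_over[symmetric])
  show "(\<lambda>k. ln (real k + 2) / 2 ^ k) \<in> O(\<lambda>k. 1 / (4 / 3) ^ k)"
    by real_asymp
qed

lemma sums_ln_ratio_div_pow2:
  "(\<lambda>k. (ln (real k + 2) - ln (real k + 1)) / 2 ^ k) sums (2 * (\<Sum>n. ln (real (n + 2)) / 2 ^ (n + 2)))"
proof -
  define u where "u k = ln (real k + 2) / 2 ^ k" for k :: nat
  have u: "u sums suminf u"
    using summable_ln_div_pow2 unfolding u_def by (rule summable_sums)
  have "(\<lambda>k. ln (real k + 1) / 2 ^ k) sums (suminf u / 2)"
  proof (rule sums_Suc_imp)
    show "(\<lambda>k. ln (real (Suc k) + 1) / 2 ^ Suc k) sums (suminf u / 2)"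
      using sums_divide[OF u, of 2] by (simp add: u_def add.commute mult.commute)
  qed simp
  with u have diff: "(\<lambda>k. u k - ln (real k + 1) / 2 ^ k) sums (suminf u - suminf u / 2)"
    by (rule sums_diff)
  have "(\<lambda>k. u k - ln (real k + 1) / 2 ^ k) = (\<lambda>k. (ln (real k + 2) - ln (real k + 1)) / 2 ^ k)"
    by (simp add: u_def diff_divide_distrib)
  moreover have "(\<Sum>n. ln (real (n + 2)) / 2 ^ (n + 2)) = suminf u / 4"
    using suminf_divide[OF sums_summable[OF u], of 4] by (simp add: u_def add.commute mult.commute)
  then have "suminf u - suminf u / 2 = 2 * (\<Sum>n. ln (real (n + 2)) / 2 ^ (n + 2))"
    by simp
  ultimately show ?thesis
    using diff by (simp only:)
qed

lemma doubling_recurrence_tendsto: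
  fixes G c :: "nat \<Rightarrow> real"
  assumes G0: "G 0 = 0" and G_Suc: "\<And>n. G (Suc n) = 2 * G n + c n"
    and c: "(\<lambda>k. c k / 2 ^ k) sums s"
  shows "(\<lambda>n. (G n + c n) / (2 ^ Suc n - 1)) \<longlonglongrightarrow> s / 4"
proof -
  have G: "G n / 2 ^ n = (\<Sum>k<n. c k / 2 ^ k) / 2" for n
    by (induction n) (simp_all add: G0 G_Suc field_simps)
  have G_lim: "(\<lambda>n. G n / 2 ^ n) \<longlonglongrightarrow> s / 2"
    unfolding G using c unfolding sums_def by (rule tendsto_divide) simp_all
  have c_lim: "(\<lambda>n. c n / 2 ^ n) \<longlonglongrightarrow> 0"
    using c by (intro summable_LIMSEQ_zero sums_summable)
  have "(\<lambda>n::nat. 2 ^ n / (2 ^ Suc n - 1 :: real)) \<longlonglongrightarrow> 1 / 2"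
    by real_asymp
  then have "(\<lambda>n. (G n / 2 ^ n + c n / 2 ^ n) * (2 ^ n / (2 ^ Suc n - 1))) \<longlonglongrightarrow> (s / 2 + 0) * (1 / 2)"
    by (intro tendsto_mult tendsto_add G_lim c_lim)
  then show ?thesis
    by (simp add: add_divide_distrib[symmetric])
qed

lemma recurrence_ratio:
  fixes A B :: "nat \<Rightarrow> nat"
  assumes "A 0 = 1" "B 0 = 1"
    and "\<And>n. A (Suc n) = A n * (A n + B n)" "\<And>n. B (Suc n) = B n * A n"
  shows "A n = (n + 1) * B n \<and> B n > 0"
  by (induction n) (simp_all add: assms algebra_simps)

lemma recurrence_ln_growth:
  fixes A B :: "nat \<Rightarrow> nat"
  assumes A0: "A 0 = 1" and B0: "B 0 = 1"
    and A_Suc: "\<And>n. A (Suc n) = A n * (A n + B n)" and B_Suc: "\<And>n. B (Suc n) = B n * A n"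
  shows "(\<lambda>n. ln (real (A n + B n)) / real (\<Sum>i\<le>n. (2::nat) ^ i)) \<longlonglongrightarrow>
           (1/2) * (\<Sum>n. ln (real (n + 2)) / 2 ^ (n + 2))"
proof -
  define G where "G n = ln (real (A n))" for n
  define c where "c n = ln (real n + 2) - ln (real n + 1)" for n :: nat
  have A: "real (A n) = (real n + 1) * real (B n)" and B: "real (B n) > 0" for n
    using recurrence_ratio[OF assms, of n] by (simp_all add: algebra_simps)
  have ln_sum: "ln (real (A n + B n)) = G n + c n" for n
  proof -
    have "real (A n + B n) = (real n + 2) * real (B n)" using A by (simp add: algebra_simps)
    then have "ln (real (A n + B n)) = ln (real n + 2) + ln (real (B n))"
      using B[of n] by (simp add: ln_mult)
    moreover have "G n = ln (real n + 1) + ln (real (B n))"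
      using B[of n] by (simp add: G_def A ln_mult)
    ultimately show ?thesis by (simp add: c_def)
  qed
  have G_Suc: "G (Suc n) = 2 * G n + c n" for n
  proof -
    have "real (A n) > 0" using A[of n] B[of n] by simp
    then have "G (Suc n) = G n + ln (real (A n + B n))"
      unfolding G_def A_Suc of_nat_mult by (rule ln_mult_pos) (use B[of n] in simp_all)
    then show ?thesis using ln_sum[of n] by simp
  qed
  have "(\<lambda>n. (G n + c n) / (2 ^ Suc n - 1)) \<longlonglongrightarrow> 2 * (\<Sum>n. ln (real (n + 2)) / 2 ^ (n + 2)) / 4"
    by (rule doubling_recurrence_tendsto[OF _ G_Suc sums_ln_ratio_div_pow2[folded c_def]])
      (simp add: G_def A0)
  moreover have "real (\<Sum>i\<le>n. (2::nat) ^ i) = 2 ^ Suc n - 1" for n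
    by (induction n) simp_all
  ultimately show ?thesis
    unfolding ln_sum by simp
qed

theorem hPS_seq_tendsto_single_forbidden_loop:
  assumes "c \<in> {0, 1}"
    and "Q c c = 1" "Q c (1 - c) = 1" "Q (1 - c) c = 1" "Q (1 - c) (1 - c) \<noteq> 1"
  shows "hPS_seq (tree_shift matB Q) \<longlonglongrightarrow> (1/2) * (\<Sum>n. ln (real (n + 2)) / 2 ^ (n + 2))"
  unfolding hPS_seq_def card_rooted_blocks_single_forbidden_loop(5)[OF assms]
  by (rule recurrence_ln_growth) (fact card_rooted_blocks_single_forbidden_loop(1-4)[OF assms])+

theorem mainTheorem16:
  shows "hPS_seq (tree_shift matB matD) \<longlonglongrightarrow>
           (1/2) * (\<Sum>n. ln (real (n + 2)) / 2 ^ (n + 2))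
       \<and> hPS_seq (tree_shift matB matF) \<longlonglongrightarrow>
           (1/2) * (\<Sum>n. ln (real (n + 2)) / 2 ^ (n + 2))"
proof
  show "hPS_seq (tree_shift matB matD) \<longlonglongrightarrow> (1/2) * (\<Sum>n. ln (real (n + 2)) / 2 ^ (n + 2))"
    by (rule hPS_seq_tendsto_single_forbidden_loop[where c = 0]) (simp_all add: matD_def)
  show "hPS_seq (tree_shift matB matF) \<longlonglongrightarrow> (1/2) * (\<Sum>n. ln (real (n + 2)) / 2 ^ (n + 2))"
    by (rule hPS_seq_tendsto_single_forbidden_loop[where c = 1]) (simp_all add: matF_def)
qed

end
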